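(* The group $G_3$ has exponential word growth (with respect to the generating set $\{a,b,c\}$).
   Context: Let $X=\{1,2,3\}$ and $T$ the ternary rooted tree with vertex set $X^*$. $\mathrm{Aut}(T)$ is the group of root-preserving automorphisms with product left-to-right: $(gh)(u)=h(g(u))$. Sections $g|_u$ are defined by $g(uv)=g(u)\,g|_u(v)$; we write $g=(g|_1,g|_2,g|_3)\lambda_g$ with $\lambda_g\in S_3$ the action on the first level; $e$ is the identity. $G_3=\langle a,b,c\rangle\le\mathrm{Aut}(T)$ with $a=(a,b,e)(1\,2)$, $b=(e,b,c)(2\,3)$, $c=(a,e,c)(3\,1)$. *)

theory Defs
  imports Complex_Main
begin

text \<open>The alphabet X = {1,2,3} and the ternary rooted tree with vertex set X*
  (finite words over X, represented as lists; the root is the empty list).\<close>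
datatype letter = L1 | L2 | L3

datatype gen = A | B | C

text \<open>The action of the generators a, b, c on X*, read off from the wreath recursion
  g(x v) = lambda_g(x) g|_x(v):
  a = (a,b,e)(1 2),  b = (e,b,c)(2 3),  c = (a,e,c)(3 1).\<close>
fun act :: "gen \<Rightarrow> letter list \<Rightarrow> letter list" where
  "act g [] = []"
| "act A (L1 # v) = L2 # act A v"
| "act A (L2 # v) = L1 # act B v"
| "act A (L3 # v) = L3 # v"
| "act B (L1 # v) = L1 # v"
| "act B (L2 # v) = L3 # act B v"
| "act B (L3 # v) = L2 # act C v"
| "act C (L1 # v) = L3 # act A v"
| "act C (L2 # v) = L2 # v"
| "act C (L3 # v) = L1 # act C v"

definition sym_gens :: "(letter list \<Rightarrow> letter list) set" where
  "sym_gens = act ` UNIV \<union> (\<lambda>g. inv (act g)) ` UNIV"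

text \<open>Evaluation of a word s_1 ... s_k in the group, with the left-to-right product
  convention (gh)(u) = h(g(u)): the element acts as s_k \<circ> ... \<circ> s_1.\<close>
definition eval_word :: "(letter list \<Rightarrow> letter list) list \<Rightarrow> (letter list \<Rightarrow> letter list)" where
  "eval_word ws = fold (\<lambda>g f. g \<circ> f) ws id"

definition ball :: "nat \<Rightarrow> (letter list \<Rightarrow> letter list) set" where
  "ball n = {eval_word ws | ws. length ws \<le> n \<and> set ws \<subseteq> sym_gens}"

definition growth :: "nat \<Rightarrow> nat" where
  "growth n = card (ball n)"

definition exponential_growth :: "(nat \<Rightarrow> nat) \<Rightarrow> bool" where
  "exponential_growth \<gamma> \<longleftrightarrow> (\<exists>C::real. C > 1 \<and> (\<forall>n. real (\<gamma> n) \<ge> C ^ n))"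

end

theory Submission
  imports Defs
begin

text \<open>Distinct positive words in a, b, c define distinct elements of G_3, so the ball of
  radius n contains the 3^n elements given by the positive words of length n.
  Injectivity is proved by descent on the total length of two words with the same action.
  The section of a positive word at a letter is again a positive word, no longer than the
  word, and it loses a letter whenever some generator of the word fixes the letter it sees.
  If the two words end in different generators g and h, the letter fixed by the third
  generator is moved by both, to different letters, so suitable sections of the two words
  end in different generators; either they are shorter, or both begin with the same
  generator, which can be cancelled. A nonempty positive word acting trivially is shortened
  the same way after rotating it so that its first and last generators differ.\<close>

fun root_perm :: "gen \<Rightarrow> letter \<Rightarrow> letter" where
  "root_perm A L1 = L2" | "root_perm A L2 = L1" | "root_perm A L3 = L3"
| "root_perm B L1 = L1" | "root_perm B L2 = L3" | "root_perm B L3 = L2"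
| "root_perm C L1 = L3" | "root_perm C L2 = L2" | "root_perm C L3 = L1"

fun letter_gen :: "letter \<Rightarrow> gen" where
  "letter_gen L1 = A" | "letter_gen L2 = B" | "letter_gen L3 = C"

fun fixed_letter :: "gen \<Rightarrow> letter" where
  "fixed_letter A = L3" | "fixed_letter B = L1" | "fixed_letter C = L2"

text \<open>The nontrivial sections a|_1 = a, a|_2 = b, b|_2 = b, b|_3 = c, c|_1 = a, c|_3 = c
  are all of the form g|_x = letter_gen x.\<close>
definition gen_section :: "gen \<Rightarrow> letter \<Rightarrow> gen list" where
  "gen_section g x = (if root_perm g x = x then [] else [letter_gen x])"

fun word_act :: "gen list \<Rightarrow> letter list \<Rightarrow> letter list" where
  "word_act [] v = v"
| "word_act (g # w) v = word_act w (act g v)"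

fun word_perm :: "gen list \<Rightarrow> letter \<Rightarrow> letter" where
  "word_perm [] x = x"
| "word_perm (g # w) x = word_perm w (root_perm g x)"

fun word_perm_inv :: "gen list \<Rightarrow> letter \<Rightarrow> letter" where
  "word_perm_inv [] y = y"
| "word_perm_inv (g # w) y = root_perm g (word_perm_inv w y)"

fun word_section :: "gen list \<Rightarrow> letter \<Rightarrow> gen list" where
  "word_section [] x = []"
| "word_section (g # w) x = gen_section g x @ word_section w (root_perm g x)"

fun act_inv :: "gen \<Rightarrow> letter list \<Rightarrow> letter list" where
  "act_inv g [] = []"
| "act_inv A (L2 # v) = L1 # act_inv A v"
| "act_inv A (L1 # v) = L2 # act_inv B v"
| "act_inv A (L3 # v) = L3 # v"
| "act_inv B (L1 # v) = L1 # v"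
| "act_inv B (L3 # v) = L2 # act_inv B v"
| "act_inv B (L2 # v) = L3 # act_inv C v"
| "act_inv C (L3 # v) = L1 # act_inv A v"
| "act_inv C (L2 # v) = L2 # v"
| "act_inv C (L1 # v) = L3 # act_inv C v"

lemma root_perm_root_perm [simp]: "root_perm g (root_perm g x) = x"
  by (cases g; cases x) auto

lemma root_perm_eq_iff_fixed_letter: "root_perm g x = x \<longleftrightarrow> x = fixed_letter g"
  by (cases g; cases x) auto

lemma root_perm_fixed_letter [simp]: "root_perm g (fixed_letter g) = fixed_letter g"
  by (cases g) auto

lemma fixed_letter_inj: "fixed_letter g = fixed_letter h \<Longrightarrow> g = h"
  by (cases g; cases h) auto

lemma root_perm_fixed_letter_neq:
  "g \<noteq> h \<Longrightarrow> k \<noteq> g \<Longrightarrow> k \<noteq> h \<Longrightarrow> root_perm g (fixed_letter k) \<noteq> root_perm h (fixed_letter k)"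
  by (cases g; cases h; cases k) auto

lemma letter_gen_inj: "letter_gen x = letter_gen y \<Longrightarrow> x = y"
  by (cases x; cases y) auto

lemma word_perm_append: "word_perm (u @ w) x = word_perm w (word_perm u x)"
  by (induction u arbitrary: x) auto

lemma word_perm_word_perm_inv: "word_perm w (word_perm_inv w y) = y"
  by (induction w arbitrary: y) auto

lemma act_act_inv: "act g (act_inv g v) = v"
  by (induction g v rule: act_inv.induct) auto

lemma act_inv_act: "act_inv g (act g v) = v"
  by (induction g v rule: act.induct) auto

lemma act_inj: "act g u = act g v \<Longrightarrow> u = v"
  by (metis act_inv_act)

lemma word_act_Nil: "word_act [] = id"
  by (simp add: fun_eq_iff)

lemma word_act_append: "word_act (u @ w) v = word_act w (word_act u v)"
  by (induction u arbitrary: v) auto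

lemma surj_word_act: "surj (word_act w)"
proof (induction w)
  case (Cons g w)
  have "surj (act g)" by (metis act_act_inv surjI)
  moreover have "word_act (g # w) = word_act w \<circ> act g" by (simp add: fun_eq_iff)
  ultimately show ?case using Cons.IH by (metis comp_surj)
qed simp

lemma word_act_Cons_cancel:
  assumes "word_act (g # u) = word_act (g # w)"
  shows "word_act u = word_act w"
proof
  fix t
  show "word_act u t = word_act w t"
    using fun_cong[OF assms, of "act_inv g t"] by (simp add: act_act_inv)
qed

lemma act_Cons: "act g (x # v) = root_perm g x # word_act (gen_section g x) v"
  by (cases g; cases x) (auto simp: gen_section_def)

lemma word_act_Cons: "word_act w (x # v) = word_perm w x # word_act (word_section w x) v"
  by (induction w arbitrary: x v) (auto simp: act_Cons word_act_append)

lemma word_act_eqD: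
  assumes "word_act u = word_act w"
  shows "word_perm u x = word_perm w x"
    and "word_act (word_section u x) = word_act (word_section w x)"
  using fun_cong[OF assms, of "x # v" for v] by (simp_all add: word_act_Cons fun_eq_iff)

lemma word_act_rotate_id:
  assumes "word_act (u @ w) = id"
  shows "word_act (w @ u) = id"
proof
  fix t
  obtain v where "word_act u v = t" using surjD[OF surj_word_act] by metis
  then show "word_act (w @ u) t = id t"
    using fun_cong[OF assms, of v] by (simp add: word_act_append)
qed

lemma word_section_append:
  "word_section (u @ w) x = word_section u x @ word_section w (word_perm u x)"
  by (induction u arbitrary: x) auto

lemma length_word_section_le: "length (word_section w x) \<le> length w"
  by (induction w arbitrary: x) (auto simp: gen_section_def intro: le_SucI)

lemma word_section_Cons_full:
  assumes "length (word_section (g # w) x) = Suc (length w)"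
  shows "word_section (g # w) x = letter_gen x # word_section w (root_perm g x)"
  using assms length_word_section_le[of w "root_perm g x"]
  by (auto simp: gen_section_def split: if_splits)

lemma shorter_pair_of_sections:
  assumes eq: "word_act u = word_act w" and ne: "word_section u x \<noteq> word_section w x"
    and "u \<noteq> []" "w \<noteq> []"
  shows "\<exists>u' w'. u' \<noteq> w' \<and> word_act u' = word_act w' \<and>
           length u' + length w' < length u + length w"
proof (cases "length (word_section u x) + length (word_section w x) < length u + length w")
  case True
  then show ?thesis using ne word_act_eqD(2)[OF eq] by blast
next
  case False
  obtain g u1 h w1 where u: "u = g # u1" and w: "w = h # w1"
    using \<open>u \<noteq> []\<close> \<open>w \<noteq> []\<close> by (meson neq_Nil_conv)
  have full: "length (word_section u x) = length u" "length (word_section w x) = length w"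
    using False length_word_section_le[of u x] length_word_section_le[of w x] by linarith+
  have su: "word_section u x = letter_gen x # word_section u1 (root_perm g x)"
    using word_section_Cons_full full(1) u by simp
  have sw: "word_section w x = letter_gen x # word_section w1 (root_perm h x)"
    using word_section_Cons_full full(2) w by simp
  have "word_act (word_section u1 (root_perm g x)) = word_act (word_section w1 (root_perm h x))"
    using word_act_eqD(2)[OF eq, of x] su sw by (metis word_act_Cons_cancel)
  moreover have "word_section u1 (root_perm g x) \<noteq> word_section w1 (root_perm h x)"
    using ne su sw by simp
  moreover have "length (word_section u1 (root_perm g x)) + length (word_section w1 (root_perm h x))
      < length u + length w"
    using full su sw by simp
  ultimately show ?thesis by blast
qed

lemma distinct_last_gens_distinct_sections:
  assumes eq: "word_act (u @ [g]) = word_act (w @ [h])" and "g \<noteq> h"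
  shows "\<exists>x. word_section (u @ [g]) x \<noteq> word_section (w @ [h]) x"
proof -
  obtain k where k: "k \<noteq> g" "k \<noteq> h" using \<open>g \<noteq> h\<close> by (cases g; cases h) auto
  define y where "y = fixed_letter k"
  have moved: "root_perm g y \<noteq> y" "root_perm h y \<noteq> y"
    using k by (auto simp: y_def root_perm_eq_iff_fixed_letter dest: fixed_letter_inj)
  define x where "x = word_perm_inv u (root_perm g y)"
  have pu: "word_perm u x = root_perm g y"
    by (simp add: x_def word_perm_word_perm_inv)
  then have "word_perm (w @ [h]) x = y"
    using word_act_eqD(1)[OF eq, of x] by (simp add: word_perm_append)
  then have pw: "word_perm w x = root_perm h y"
    by (simp add: word_perm_append) (metis root_perm_root_perm)
  have "last (word_section (u @ [g]) x) = letter_gen (root_perm g y)"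
    using pu moved by (simp add: word_section_append gen_section_def)
  moreover have "last (word_section (w @ [h]) x) = letter_gen (root_perm h y)"
    using pw moved by (simp add: word_section_append gen_section_def)
  moreover have "root_perm g y \<noteq> root_perm h y"
    using root_perm_fixed_letter_neq[OF \<open>g \<noteq> h\<close> k] by (simp add: y_def)
  ultimately show ?thesis by (metis letter_gen_inj)
qed

lemma split_at_change:
  assumes "\<exists>y\<in>set w. y \<noteq> hd w"
  shows "\<exists>u v. w = u @ v \<and> u \<noteq> [] \<and> v \<noteq> [] \<and> last u \<noteq> hd v"
  using assms
proof (induction w)
  case (Cons z w)
  show ?case
  proof (cases "w \<noteq> [] \<and> hd w = z")
    case True
    then obtain u v where "w = u @ v" "u \<noteq> []" "v \<noteq> []" "last u \<noteq> hd v"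
      using Cons by auto
    then show ?thesis by (intro exI[of _ "z # u"] exI[of _ v]) auto
  next
    case False
    then show ?thesis using Cons.prems by (intro exI[of _ "[z]"] exI[of _ w]) auto
  qed
qed simp

text \<open>The section at the letter fixed by the first generator drops that generator, and
  it is nonempty because the last generator moves that letter.\<close>
lemma shorter_identity_word_of_ends_differ:
  assumes id: "word_act w = id" and "w \<noteq> []" and "hd w \<noteq> last w"
  shows "\<exists>w'. w' \<noteq> [] \<and> length w' < length w \<and> word_act w' = id"
proof -
  obtain h m where hm: "w = h # m" using \<open>w \<noteq> []\<close> by (cases w) auto
  obtain m' g where mg: "w = m' @ [g]" using \<open>w \<noteq> []\<close> by (cases w rule: rev_exhaust) auto
  define y where "y = fixed_letter h"
  have "g \<noteq> h" using assms(3) hm mg by (metis last_snoc list.sel(1))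
  then have gy: "root_perm g y \<noteq> y"
    by (auto simp: y_def root_perm_eq_iff_fixed_letter dest: fixed_letter_inj)
  have eq: "word_act w = word_act []" using id by (simp add: word_act_Nil)
  have "word_section w y = word_section m y"
    using hm by (simp add: y_def gen_section_def root_perm_eq_iff_fixed_letter)
  then have "length (word_section w y) < length w"
    using length_word_section_le[of m y] hm by simp
  moreover have "word_perm m' y = root_perm g y"
    using word_act_eqD(1)[OF eq, of y] mg by (simp add: word_perm_append) (metis root_perm_root_perm)
  then have "word_section w y \<noteq> []"
    using mg gy by (simp add: word_section_append gen_section_def)
  moreover have "word_act (word_section w y) = id"
    using word_act_eqD(2)[OF eq, of y] by (simp add: fun_eq_iff)
  ultimately show ?thesis by blast
qed

text \<open>For a power of a single generator, the section at a letter it moves begins with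
  two different generators.\<close>
lemma nonconstant_identity_word:
  assumes id: "word_act w = id" and "w \<noteq> []"
  shows "\<exists>w'. w' \<noteq> [] \<and> length w' \<le> length w \<and> word_act w' = id \<and> (\<exists>y\<in>set w'. y \<noteq> hd w')"
proof (cases "\<exists>y\<in>set w. y \<noteq> hd w")
  case False
  obtain g r where w: "w = g # r" using \<open>w \<noteq> []\<close> by (cases w) auto
  obtain y where gy: "root_perm g y \<noteq> y"
    by (metis letter.distinct(2) root_perm_eq_iff_fixed_letter)
  have eq: "word_act w = word_act []" using id by (simp add: word_act_Nil)
  show ?thesis
  proof (cases r)
    case Nil
    then show ?thesis using fun_cong[OF id, of "[y]"] w gy by (simp add: act_Cons)
  next
    case (Cons g' r')
    have "g' = g" using False w Cons by auto
    then have s: "word_section w y = letter_gen y # letter_gen (root_perm g y) # word_section r' y"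
      using w Cons gy by (simp add: gen_section_def)
    moreover have "letter_gen y \<noteq> letter_gen (root_perm g y)" using gy letter_gen_inj by metis
    moreover have "word_act (word_section w y) = id"
      using word_act_eqD(2)[OF eq, of y] by (simp add: fun_eq_iff)
    ultimately show ?thesis using length_word_section_le[of w y]
      by (intro exI[of _ "word_section w y"]) auto
  qed
qed (use assms in blast)

lemma shorter_identity_word:
  assumes "word_act w = id" and "w \<noteq> []"
  shows "\<exists>w'. w' \<noteq> [] \<and> length w' < length w \<and> word_act w' = id"
proof -
  obtain w1 where w1: "w1 \<noteq> []" "length w1 \<le> length w" "word_act w1 = id" "\<exists>y\<in>set w1. y \<noteq> hd w1"
    using nonconstant_identity_word[OF assms] by blast
  obtain u v where uv: "w1 = u @ v" "u \<noteq> []" "v \<noteq> []" "last u \<noteq> hd v"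
    using split_at_change[OF w1(4)] by blast
  have "word_act (v @ u) = id" using word_act_rotate_id w1(3) uv(1) by blast
  moreover have "hd (v @ u) \<noteq> last (v @ u)" using uv by auto
  ultimately show ?thesis
    using shorter_identity_word_of_ends_differ[of "v @ u"] uv w1(2) by fastforce
qed

lemma word_act_eq_id_imp_Nil: "word_act w = id \<Longrightarrow> w = []"
proof (induction "length w" arbitrary: w rule: less_induct)
  case less
  then show ?case using shorter_identity_word by blast
qed

lemma inj_word_act: "inj word_act"
proof (rule injI)
  fix u w :: "gen list"
  show "word_act u = word_act w \<Longrightarrow> u = w"
  proof (induction "length u + length w" arbitrary: u w rule: less_induct)
    case less
    show ?case
    proof (cases "u = [] \<or> w = []")
      case True
      then show ?thesis
        using less.prems by (metis word_act_Nil word_act_eq_id_imp_Nil)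
    next
      case False
      then obtain u' g w' h where snoc: "u = u' @ [g]" "w = w' @ [h]"
        by (meson rev_exhaust)
      show ?thesis
      proof (cases "g = h")
        case True
        then have "word_act u' = word_act w'"
          using less.prems snoc by (auto simp: fun_eq_iff word_act_append dest: act_inj)
        then show ?thesis using less.hyps[of u' w'] snoc True by simp
      next
        case False
        then obtain x where "word_section u x \<noteq> word_section w x"
          using distinct_last_gens_distinct_sections less.prems snoc by blast
        then obtain u2 w2 where "u2 \<noteq> w2" "word_act u2 = word_act w2"
            "length u2 + length w2 < length u + length w"
          using shorter_pair_of_sections[OF less.prems] snoc by blast
        then show ?thesis using less.hyps by blast
      qed
    qed
  qed
qed

lemma eval_word_map_act: "eval_word (map act w) = word_act w"
proof -
  have "fold (\<lambda>g f. g \<circ> f) (map act w) f0 = word_act w \<circ> f0" for f0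
    by (induction w arbitrary: f0) (auto simp: comp_def)
  from this[of id] show ?thesis by (simp add: eval_word_def)
qed

lemma UNIV_gen: "(UNIV :: gen set) = {A, B, C}"
  using gen.exhaust by auto

lemma finite_UNIV_gen: "finite (UNIV :: gen set)"
  by (simp add: UNIV_gen)

lemma card_UNIV_gen: "card (UNIV :: gen set) = 3"
  by (simp add: UNIV_gen)

lemma finite_ball: "finite (ball n)"
proof -
  have "finite sym_gens" unfolding sym_gens_def by (simp add: finite_UNIV_gen)
  moreover have "ball n = eval_word ` {ws. set ws \<subseteq> sym_gens \<and> length ws \<le> n}"
    unfolding ball_def by auto
  ultimately show ?thesis by (simp add: finite_lists_length_le)
qed

lemma positive_words_in_ball: "word_act ` {w. length w = n} \<subseteq> ball n"
  unfolding ball_def sym_gens_def by (force simp flip: eval_word_map_act)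

lemma three_pow_le_growth: "3 ^ n \<le> growth n"
proof -
  have "3 ^ n = card {w :: gen list. length w = n}"
    using card_lists_length_eq[of "UNIV :: gen set" n] by (simp add: finite_UNIV_gen card_UNIV_gen)
  also have "\<dots> = card (word_act ` {w. length w = n})"
    using card_image[OF inj_on_subset[OF inj_word_act]] by simp
  also have "\<dots> \<le> growth n"
    unfolding growth_def by (rule card_mono[OF finite_ball positive_words_in_ball])
  finally show ?thesis .
qed

theorem corollary5p3:
  shows "exponential_growth growth"
  unfolding exponential_growth_def
proof (intro exI[of _ "3::real"] conjI allI)
  fix n
  show "(3::real) ^ n \<le> real (growth n)"
    using three_pow_le_growth[of n] by (metis of_nat_le_iff of_nat_numeral of_nat_power)
qed simp

end
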